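(* Let $n,m\ge1$, $r>0$, and let $\mathbf b_1,\dots,\mathbf b_m\in[0,\infty)^n$ be nonzero vectors with nonnegative entries. Put $D_{ij}=\frac{r}{m}(\mathbf b_i\cdot\mathbf b_j)$ for $i,j=1,\dots,m$. Then the system of equations $$\sum_{j=1}^m D_{kj}\alpha_k\alpha_j=1,\qquad k=1,\dots,m,$$ has at most one solution $(\alpha_1,\dots,\alpha_m)$ with all $\alpha_k>0$. *)

theory Defs
  imports "HOL-Analysis.Analysis"
begin

end

theory Submission
  imports Defs
begin

text \<open>
  Write \<open>G\<close> for the Gram matrix of the \<open>b\<^sub>k\<close>. A positive solution satisfies
  \<open>(G\<alpha>)\<^sub>k = 1/(q \<alpha>\<^sub>k)\<close>, so for two solutions and \<open>c = \<alpha> - \<beta>\<close> the quadratic form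
  \<open>c\<^sup>T G c = \<Sum>\<^sub>k c\<^sub>k (1/(q\<alpha>\<^sub>k) - 1/(q\<beta>\<^sub>k)) = - \<Sum>\<^sub>k c\<^sub>k\<^sup>2/(q\<alpha>\<^sub>k\<beta>\<^sub>k)\<close> is \<open>\<le> 0\<close>,
  while it equals \<open>\<parallel>\<Sum>\<^sub>k c\<^sub>k b\<^sub>k\<parallel>\<^sup>2 \<ge> 0\<close>. Hence every \<open>c\<^sub>k\<close> vanishes.
\<close>

lemma gram_quadratic_form_nonneg:
  fixes b :: "'i \<Rightarrow> 'a::real_inner"
  shows "0 \<le> (\<Sum>k\<in>A. c k * (\<Sum>j\<in>A. (b k \<bullet> b j) * c j))"
proof -
  have "(\<Sum>k\<in>A. c k * (\<Sum>j\<in>A. (b k \<bullet> b j) * c j))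
      = (\<Sum>k\<in>A. c k *\<^sub>R b k) \<bullet> (\<Sum>k\<in>A. c k *\<^sub>R b k)"
    by (simp add: inner_sum_left inner_sum_right sum_distrib_left mult_ac inner_commute)
  then show ?thesis by simp
qed

lemma gram_system_positive_solution_unique:
  fixes b :: "'i \<Rightarrow> 'a::real_inner" and \<alpha> \<beta> :: "'i \<Rightarrow> real"
  assumes "q > 0"
    and \<alpha>_pos: "\<And>k. k \<in> A \<Longrightarrow> \<alpha> k > 0"
    and \<alpha>_sol: "\<And>k. k \<in> A \<Longrightarrow> q * \<alpha> k * (\<Sum>j\<in>A. (b k \<bullet> b j) * \<alpha> j) = 1"
    and \<beta>_pos: "\<And>k. k \<in> A \<Longrightarrow> \<beta> k > 0"
    and \<beta>_sol: "\<And>k. k \<in> A \<Longrightarrow> q * \<beta> k * (\<Sum>j\<in>A. (b k \<bullet> b j) * \<beta> j) = 1"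
    and "k \<in> A"
  shows "\<alpha> k = \<beta> k"
proof (cases "finite A")
  case False
  then have "\<alpha> k * q * 0 = 1" using \<alpha>_sol[OF \<open>k \<in> A\<close>] by (simp add: mult_ac)
  then show ?thesis by simp
next
  case True
  define c where "c k = \<alpha> k - \<beta> k" for k
  define w where "w k = (c k)\<^sup>2 / (q * \<alpha> k * \<beta> k)" for k
  have w_nonneg: "0 \<le> w k" if "k \<in> A" for k
    using \<open>q > 0\<close> \<alpha>_pos[OF that] \<beta>_pos[OF that] by (simp add: w_def)
  have "(\<Sum>k\<in>A. c k * (\<Sum>j\<in>A. (b k \<bullet> b j) * c j)) = (\<Sum>k\<in>A. - w k)"
  proof (rule sum.cong[OF refl])
    fix k assume k: "k \<in> A"
    have row_\<alpha>: "(\<Sum>j\<in>A. (b k \<bullet> b j) * \<alpha> j) = 1 / (q * \<alpha> k)"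
      using \<alpha>_sol[OF k] \<open>q > 0\<close> \<alpha>_pos[OF k] by (simp add: eq_divide_eq mult_ac)
    have row_\<beta>: "(\<Sum>j\<in>A. (b k \<bullet> b j) * \<beta> j) = 1 / (q * \<beta> k)"
      using \<beta>_sol[OF k] \<open>q > 0\<close> \<beta>_pos[OF k] by (simp add: eq_divide_eq mult_ac)
    have "(\<Sum>j\<in>A. (b k \<bullet> b j) * c j) = 1 / (q * \<alpha> k) - 1 / (q * \<beta> k)"
      by (simp add: c_def right_diff_distrib sum_subtractf row_\<alpha> row_\<beta>)
    moreover have "c k * (1 / (q * \<alpha> k) - 1 / (q * \<beta> k)) = - w k"
      using \<open>q > 0\<close> \<alpha>_pos[OF k] \<beta>_pos[OF k]
      unfolding c_def w_def by (simp add: field_simps power2_eq_square)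
    ultimately show "c k * (\<Sum>j\<in>A. (b k \<bullet> b j) * c j) = - w k" by simp
  qed
  then have "(\<Sum>k\<in>A. w k) \<le> 0"
    using gram_quadratic_form_nonneg[where A = A and c = c and b = b] by (simp add: sum_negf)
  then have "w k = 0"
    using True w_nonneg \<open>k \<in> A\<close> by (meson order_antisym sum_nonneg sum_nonneg_eq_0_iff)
  then show ?thesis
    using \<open>q > 0\<close> \<alpha>_pos[OF \<open>k \<in> A\<close>] \<beta>_pos[OF \<open>k \<in> A\<close>] by (simp add: w_def c_def)
qed

theorem theorem2:
  fixes m :: nat and r :: real and b :: "nat \<Rightarrow> real ^ 'n"
    and \<alpha> \<beta> :: "nat \<Rightarrow> real"
  assumes "m \<ge> 1" and "r > 0"
    and "\<And>i. i < m \<Longrightarrow> b i \<noteq> 0"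
    and "\<And>i l. i < m \<Longrightarrow> b i $ l \<ge> 0"
    and "\<And>k. k < m \<Longrightarrow> \<alpha> k > 0"
    and "\<And>k. k < m \<Longrightarrow> (\<Sum>j<m. (r / real m) * (b k \<bullet> b j) * \<alpha> k * \<alpha> j) = 1"
    and "\<And>k. k < m \<Longrightarrow> \<beta> k > 0"
    and "\<And>k. k < m \<Longrightarrow> (\<Sum>j<m. (r / real m) * (b k \<bullet> b j) * \<beta> k * \<beta> j) = 1"
  shows "\<forall>k<m. \<alpha> k = \<beta> k"
proof -
  have factor: "(\<Sum>j<m. (r / real m) * (b k \<bullet> b j) * \<gamma> k * \<gamma> j)
      = r / real m * \<gamma> k * (\<Sum>j<m. (b k \<bullet> b j) * \<gamma> j)" for k and \<gamma> :: "nat \<Rightarrow> real"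
    by (simp add: sum_distrib_left mult_ac)
  have "r / real m > 0" using assms(1,2) by simp
  moreover have "r / real m * \<alpha> k * (\<Sum>j\<in>{..<m}. (b k \<bullet> b j) * \<alpha> j) = 1"
    if "k \<in> {..<m}" for k
    using assms(6) factor that by (metis lessThan_iff)
  moreover have "r / real m * \<beta> k * (\<Sum>j\<in>{..<m}. (b k \<bullet> b j) * \<beta> j) = 1"
    if "k \<in> {..<m}" for k
    using assms(8) factor that by (metis lessThan_iff)
  ultimately show ?thesis
    using gram_system_positive_solution_unique[where q = "r / real m" and A = "{..<m}"] assms(5,7)
    by blast
qed

end
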